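(* Let $C$ be a free abelian group with basis $\{c_i\mid i\in\mathbb{Z}\}$, so each $x\in C$ is uniquely $x=\sum_{i\in\mathbb{Z}}x_ic_i$ with finitely many nonzero $x_i\in\mathbb{Z}$. For $x,y\in C$ with $y=\sum_i y_ic_i$, define \[\lambda_x(y)=\sum_{i\in\mathbb{Z}}y_i\,c_{i+\sum_{j\in\mathbb{Z}}x_j},\] and define $xy=x+\lambda_x(y)$. Then $(C,+,\cdot)$ is a left brace with $C^{(3)}=\{0\}$, it is generated (as a left brace) by $c_0$, and $C^j\neq\{0\}$ for all $j\in\mathbb{N}$. Moreover, if $A$ is any left brace with $A^{(3)}=\{0\}$ and $b\in A$, there exists a unique left brace epimorphism $\alpha$ from $C$ onto the subbrace of $A$ generated by $b$ with $\alpha(c_0)=b$.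
   Context: A left brace $(A,+,\cdot)$ is a set $A$ with two binary operations such that $(A,+)$ is an abelian group, $(A,\cdot)$ is a group, and $a(b+c)=ab-a+ac$ for all $a,b,c\in A$. In a left brace, $a*b=-a+ab-b$. For subsets $L,M\subseteq A$, $L*M$ is the subgroup of $(A,+)$ generated by $\{l*m\mid l\in L,m\in M\}$. Set $A^{(1)}=A$, $A^{(r+1)}=A^{(r)}*A$, and $A^1=A$, $A^{r+1}=A*A^r$ for $r\ge1$. A subbrace is a subset that is a subgroup of both $(A,+)$ and $(A,\cdot)$; the subbrace generated by an element is the intersection of all subbraces containing it. A left brace homomorphism is a map that is a homomorphism for both operations. *)

theory Defs
  imports "HOL-Algebra.Generated_Groups"
begin

definition addgrp :: "'a set \<Rightarrow> ('a \<Rightarrow> 'a \<Rightarrow> 'a) \<Rightarrow> 'a monoid" where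
  "addgrp A add = \<lparr>carrier = A, monoid.mult = add,
      one = (THE z. z \<in> A \<and> (\<forall>a\<in>A. add z a = a \<and> add a z = a))\<rparr>"

definition mulgrp :: "'a set \<Rightarrow> ('a \<Rightarrow> 'a \<Rightarrow> 'a) \<Rightarrow> 'a monoid" where
  "mulgrp A mul = \<lparr>carrier = A, monoid.mult = mul,
      one = (THE e. e \<in> A \<and> (\<forall>a\<in>A. mul e a = a \<and> mul a e = a))\<rparr>"

definition bzero :: "'a set \<Rightarrow> ('a \<Rightarrow> 'a \<Rightarrow> 'a) \<Rightarrow> 'a" where
  "bzero A add = \<one>\<^bsub>addgrp A add\<^esub>"

definition bneg :: "'a set \<Rightarrow> ('a \<Rightarrow> 'a \<Rightarrow> 'a) \<Rightarrow> 'a \<Rightarrow> 'a" where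
  "bneg A add a = inv\<^bsub>addgrp A add\<^esub> a"

definition left_brace :: "'a set \<Rightarrow> ('a \<Rightarrow> 'a \<Rightarrow> 'a) \<Rightarrow> ('a \<Rightarrow> 'a \<Rightarrow> 'a) \<Rightarrow> bool" where
  "left_brace A add mul \<longleftrightarrow>
     comm_group (addgrp A add) \<and> group (mulgrp A mul) \<and>
     (\<forall>a\<in>A. \<forall>b\<in>A. \<forall>c\<in>A.
        mul a (add b c) = add (add (mul a b) (bneg A add a)) (mul a c))"

definition bstar :: "'a set \<Rightarrow> ('a \<Rightarrow> 'a \<Rightarrow> 'a) \<Rightarrow> ('a \<Rightarrow> 'a \<Rightarrow> 'a) \<Rightarrow> 'a \<Rightarrow> 'a \<Rightarrow> 'a" where
  "bstar A add mul a b = add (add (bneg A add a) (mul a b)) (bneg A add b)"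

definition setstar :: "'a set \<Rightarrow> ('a \<Rightarrow> 'a \<Rightarrow> 'a) \<Rightarrow> ('a \<Rightarrow> 'a \<Rightarrow> 'a) \<Rightarrow> 'a set \<Rightarrow> 'a set \<Rightarrow> 'a set" where
  "setstar A add mul L M =
     generate (addgrp A add) {bstar A add mul l m | l m. l \<in> L \<and> m \<in> M}"

text \<open>Right series: rser A add mul r = A^(r) for r \<ge> 1 (index 0 is a dummy equal to A).\<close>
fun rser :: "'a set \<Rightarrow> ('a \<Rightarrow> 'a \<Rightarrow> 'a) \<Rightarrow> ('a \<Rightarrow> 'a \<Rightarrow> 'a) \<Rightarrow> nat \<Rightarrow> 'a set" where
  "rser A add mul 0 = A"
| "rser A add mul (Suc n) = (if n = 0 then A else setstar A add mul (rser A add mul n) A)"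

text \<open>Left series: lser A add mul r = A^r for r \<ge> 1 (index 0 is a dummy equal to A).\<close>
fun lser :: "'a set \<Rightarrow> ('a \<Rightarrow> 'a \<Rightarrow> 'a) \<Rightarrow> ('a \<Rightarrow> 'a \<Rightarrow> 'a) \<Rightarrow> nat \<Rightarrow> 'a set" where
  "lser A add mul 0 = A"
| "lser A add mul (Suc n) = (if n = 0 then A else setstar A add mul A (lser A add mul n))"

definition subbrace :: "'a set \<Rightarrow> ('a \<Rightarrow> 'a \<Rightarrow> 'a) \<Rightarrow> ('a \<Rightarrow> 'a \<Rightarrow> 'a) \<Rightarrow> 'a set \<Rightarrow> bool" where
  "subbrace A add mul B \<longleftrightarrow> subgroup B (addgrp A add) \<and> subgroup B (mulgrp A mul)"

definition subbrace_gen :: "'a set \<Rightarrow> ('a \<Rightarrow> 'a \<Rightarrow> 'a) \<Rightarrow> ('a \<Rightarrow> 'a \<Rightarrow> 'a) \<Rightarrow> 'a \<Rightarrow> 'a set" where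
  "subbrace_gen A add mul b = \<Inter>{B. subbrace A add mul B \<and> b \<in> B}"

definition brace_hom :: "'a set \<Rightarrow> ('a \<Rightarrow> 'a \<Rightarrow> 'a) \<Rightarrow> ('a \<Rightarrow> 'a \<Rightarrow> 'a) \<Rightarrow>
     ('b \<Rightarrow> 'b \<Rightarrow> 'b) \<Rightarrow> ('b \<Rightarrow> 'b \<Rightarrow> 'b) \<Rightarrow> ('a \<Rightarrow> 'b) \<Rightarrow> bool" where
  "brace_hom A addA mulA addB mulB f \<longleftrightarrow>
     (\<forall>x\<in>A. \<forall>y\<in>A. f (addA x y) = addB (f x) (f y) \<and> f (mulA x y) = mulB (f x) (f y))"

text \<open>C = free abelian group on c_i (i in Z), as finitely supported functions Z \<Rightarrow> Z.\<close>
definition Cset :: "(int \<Rightarrow> int) set" where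
  "Cset = {x. finite {i. x i \<noteq> 0}}"

definition Cadd :: "(int \<Rightarrow> int) \<Rightarrow> (int \<Rightarrow> int) \<Rightarrow> (int \<Rightarrow> int)" where
  "Cadd x y = (\<lambda>i. x i + y i)"

definition cbasis :: "int \<Rightarrow> (int \<Rightarrow> int)" where
  "cbasis i = (\<lambda>k. if k = i then 1 else 0)"

definition coefsum :: "(int \<Rightarrow> int) \<Rightarrow> int" where
  "coefsum x = sum x {j. x j \<noteq> 0}"

text \<open>lambda_x(y) = sum_i y_i c_(i + coefsum x): coefficient at k is y_(k - coefsum x).\<close>
definition Clam :: "(int \<Rightarrow> int) \<Rightarrow> (int \<Rightarrow> int) \<Rightarrow> (int \<Rightarrow> int)" where
  "Clam x y = (\<lambda>k. y (k - coefsum x))"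

definition Cmul :: "(int \<Rightarrow> int) \<Rightarrow> (int \<Rightarrow> int) \<Rightarrow> (int \<Rightarrow> int)" where
  "Cmul x y = Cadd x (Clam x y)"

end

theory Submission
  imports Defs "HOL-Algebra.FiniteProduct"
begin

text \<open>
Write \<sigma>(x) for the coefficient sum of x; it is a homomorphism from both (C,+) and (C,\<cdot>)
to \<int>, and \<lambda>_x is the shift by \<sigma>(x). Every x * y lies in the kernel of \<sigma>, on which \<lambda> is trivial,
so C^(3) = 0; on the other hand c_0 * x is the difference of x and its shift, which is nonzero
for x \<noteq> 0, so C^j \<noteq> 0. In a brace A with A^(3) = 0 every \<lambda>_(a * c) is trivial, which makes
a \<mapsto> \<lambda>_a additive. Sending c_i to \<lambda>_(b^i)(b) and extending additively gives a map \<alpha> with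
\<lambda>_\<alpha>(x) = \<lambda>_(b^\<sigma>(x)) and \<alpha>(\<lambda>_x y) = \<lambda>_(b^\<sigma>(x))(\<alpha>(y)), which together say that \<alpha> is
multiplicative. Since C is generated by c_0, and preimages, images and equalizers of brace
homomorphisms respect subbraces, \<alpha> maps onto the subbrace generated by b and is unique.
\<close>

lemma carrier_addgrp [simp]: "carrier (addgrp A add) = A"
  and mult_addgrp [simp]: "monoid.mult (addgrp A add) = add"
  by (simp_all add: addgrp_def)

lemma carrier_mulgrp [simp]: "carrier (mulgrp A mul) = A"
  and mult_mulgrp [simp]: "monoid.mult (mulgrp A mul) = mul"
  by (simp_all add: mulgrp_def)

section \<open>Subbraces and brace homomorphisms\<close>

lemma subgroup_vimage:
  assumes "group G" "group H" "h \<in> hom G H" and K: "subgroup K H"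
  shows "subgroup {x \<in> carrier G. h x \<in> K} G"
proof -
  interpret group_hom G H h using assms by (simp add: group_hom_def group_hom_axioms_def)
  show ?thesis
    by (rule G.subgroupI)
       (use subgroup.one_closed[OF K] in \<open>auto simp: subgroup.m_inv_closed[OF K] subgroup.m_closed[OF K]\<close>)
qed

lemma subgroup_equalizer:
  assumes "group G" "group H" and f: "f \<in> hom G H" and g: "g \<in> hom G H"
  shows "subgroup {x \<in> carrier G. f x = g x} G"
proof -
  interpret f: group_hom G H f using assms by (simp add: group_hom_def group_hom_axioms_def)
  interpret g: group_hom G H g using assms by (simp add: group_hom_def group_hom_axioms_def)
  show ?thesis by (rule f.G.subgroupI) force+
qed

lemma subbrace_carrier: "left_brace A add mul \<Longrightarrow> subbrace A add mul A"
  unfolding subbrace_def left_brace_def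
  by (metis carrier_addgrp carrier_mulgrp comm_group.axioms(2) group.subgroup_self)

lemma subbrace_gen_least: "subbrace A add mul S \<Longrightarrow> b \<in> S \<Longrightarrow> subbrace_gen A add mul b \<subseteq> S"
  unfolding subbrace_gen_def by blast

lemma brace_hom_in_hom:
  assumes "brace_hom B addB mulB addA mulA f" "f ` B \<subseteq> A"
  shows "f \<in> hom (addgrp B addB) (addgrp A addA)" "f \<in> hom (mulgrp B mulB) (mulgrp A mulA)"
  using assms by (auto simp: hom_def brace_hom_def)

context
  fixes B :: "'b set" and addB mulB :: "'b \<Rightarrow> 'b \<Rightarrow> 'b"
    and A :: "'a set" and addA mulA :: "'a \<Rightarrow> 'a \<Rightarrow> 'a" and f :: "'b \<Rightarrow> 'a"
  assumes B: "left_brace B addB mulB" and A: "left_brace A addA mulA"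
    and f: "brace_hom B addB mulB addA mulA f" "f ` B \<subseteq> A"
begin

private lemma groups_of_braces:
  "group (addgrp B addB)" "group (mulgrp B mulB)" "group (addgrp A addA)" "group (mulgrp A mulA)"
  using A B by (simp_all add: left_brace_def comm_group.axioms(2))

lemma subbrace_vimage: "subbrace A addA mulA S \<Longrightarrow> subbrace B addB mulB {x \<in> B. f x \<in> S}"
  unfolding subbrace_def
  using subgroup_vimage[OF groups_of_braces(1,3) brace_hom_in_hom(1)[OF f]]
    subgroup_vimage[OF groups_of_braces(2,4) brace_hom_in_hom(2)[OF f]] by simp

lemma subbrace_image: "subbrace A addA mulA (f ` B)"
proof -
  have "group_hom (addgrp B addB) (addgrp A addA) f" "group_hom (mulgrp B mulB) (mulgrp A mulA) f"
    using groups_of_braces brace_hom_in_hom[OF f] by (simp_all add: group_hom_def group_hom_axioms_def)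
  then show ?thesis
    unfolding subbrace_def using group_hom.img_is_subgroup by fastforce
qed

lemma subbrace_equalizer:
  assumes g: "brace_hom B addB mulB addA mulA g" "g ` B \<subseteq> A"
  shows "subbrace B addB mulB {x \<in> B. f x = g x}"
  unfolding subbrace_def
  using subgroup_equalizer[OF groups_of_braces(1,3) brace_hom_in_hom(1)[OF f] brace_hom_in_hom(1)[OF g]]
    subgroup_equalizer[OF groups_of_braces(2,4) brace_hom_in_hom(2)[OF f] brace_hom_in_hom(2)[OF g]] by simp

end

section \<open>The brace C\<close>

definition shift :: "int \<Rightarrow> (int \<Rightarrow> int) \<Rightarrow> int \<Rightarrow> int" where
  "shift s y = (\<lambda>k. y (k - s))"

lemma Cset_iff: "x \<in> Cset \<longleftrightarrow> finite {i. x i \<noteq> 0}"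
  by (simp add: Cset_def)

lemma Cadd_closed: "x \<in> Cset \<Longrightarrow> y \<in> Cset \<Longrightarrow> Cadd x y \<in> Cset"
proof -
  assume "x \<in> Cset" "y \<in> Cset"
  then have "finite ({i. x i \<noteq> 0} \<union> {i. y i \<noteq> 0})" by (simp add: Cset_iff)
  moreover have "{i. Cadd x y i \<noteq> 0} \<subseteq> {i. x i \<noteq> 0} \<union> {i. y i \<noteq> 0}"
    by (auto simp: Cadd_def)
  ultimately show ?thesis by (simp add: Cset_iff finite_subset)
qed

lemma Cset_uminus: "x \<in> Cset \<Longrightarrow> (\<lambda>k. - x k) \<in> Cset"
  by (simp add: Cset_iff)

lemma Cset_zero: "(\<lambda>k. 0) \<in> Cset"
  by (simp add: Cset_iff)

lemma coefsum_eq_sum: "finite S \<Longrightarrow> {j. x j \<noteq> 0} \<subseteq> S \<Longrightarrow> coefsum x = sum x S"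
  unfolding coefsum_def by (rule sum.mono_neutral_left) auto

lemma coefsum_Cadd: "x \<in> Cset \<Longrightarrow> y \<in> Cset \<Longrightarrow> coefsum (Cadd x y) = coefsum x + coefsum y"
proof -
  assume "x \<in> Cset" "y \<in> Cset"
  then have fin: "finite ({i. x i \<noteq> 0} \<union> {i. y i \<noteq> 0})" (is "finite ?S")
    by (simp add: Cset_iff)
  have "coefsum (Cadd x y) = sum (Cadd x y) ?S"
    by (rule coefsum_eq_sum[OF fin]) (auto simp: Cadd_def)
  also have "\<dots> = sum x ?S + sum y ?S" by (simp add: Cadd_def sum.distrib)
  also have "\<dots> = coefsum x + coefsum y"
    using coefsum_eq_sum[OF fin, of x] coefsum_eq_sum[OF fin, of y] by auto
  finally show ?thesis .
qed

lemma coefsum_uminus: "coefsum (\<lambda>k. - x k) = - coefsum x"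
  by (simp add: coefsum_def sum_negf)

lemma coefsum_zero: "coefsum (\<lambda>k. 0) = 0"
  by (simp add: coefsum_def)

lemma support_shift: "{k. shift s y k \<noteq> 0} = (\<lambda>i. i + s) ` {i. y i \<noteq> 0}"
  by (auto simp: shift_def image_iff intro!: exI[of _ "_ - s"])

lemma shift_closed: "y \<in> Cset \<Longrightarrow> shift s y \<in> Cset"
  by (simp add: Cset_iff support_shift)

lemma coefsum_shift: "coefsum (shift s y) = coefsum y"
proof -
  have "inj_on (\<lambda>i. i + s) S" for S by (auto simp: inj_on_def)
  then show ?thesis
    unfolding coefsum_def support_shift by (subst sum.reindex) (simp_all add: shift_def)
qed

lemma Clam_eq_shift: "Clam x = shift (coefsum x)"
  by (simp add: Clam_def shift_def fun_eq_iff)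

lemma Cmul_eq: "Cmul x y = (\<lambda>k. x k + y (k - coefsum x))"
  by (simp add: Cmul_def Cadd_def Clam_def)

lemma Cmul_closed: "x \<in> Cset \<Longrightarrow> y \<in> Cset \<Longrightarrow> Cmul x y \<in> Cset"
  unfolding Cmul_def Clam_eq_shift by (intro Cadd_closed shift_closed)

lemma coefsum_Cmul: "x \<in> Cset \<Longrightarrow> y \<in> Cset \<Longrightarrow> coefsum (Cmul x y) = coefsum x + coefsum y"
  unfolding Cmul_def Clam_eq_shift by (simp add: coefsum_Cadd shift_closed coefsum_shift)

lemma one_addgrp_C: "\<one>\<^bsub>addgrp Cset Cadd\<^esub> = (\<lambda>k. 0)"
  unfolding addgrp_def by (simp, rule the_equality) (auto simp: Cadd_def Cset_zero fun_eq_iff)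

lemma one_mulgrp_C: "\<one>\<^bsub>mulgrp Cset Cmul\<^esub> = (\<lambda>k. 0)"
proof -
  have "(THE e. e \<in> Cset \<and> (\<forall>a\<in>Cset. Cmul e a = a \<and> Cmul a e = a)) = (\<lambda>k. 0)"
  proof (rule the_equality)
    fix e assume "e \<in> Cset \<and> (\<forall>a\<in>Cset. Cmul e a = a \<and> Cmul a e = a)"
    then have "Cmul e (\<lambda>k. 0) = (\<lambda>k. 0)" using Cset_zero by blast
    then show "e = (\<lambda>k. 0)" by (simp add: Cmul_eq)
  qed (simp add: Cset_zero Cmul_eq coefsum_zero)
  then show ?thesis by (simp add: mulgrp_def)
qed

lemma comm_group_addgrp_C: "comm_group (addgrp Cset Cadd)"
proof (rule comm_groupI)
  fix x assume "x \<in> carrier (addgrp Cset Cadd)"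
  then show "\<exists>y\<in>carrier (addgrp Cset Cadd). y \<otimes>\<^bsub>addgrp Cset Cadd\<^esub> x = \<one>\<^bsub>addgrp Cset Cadd\<^esub>"
    by (auto simp: one_addgrp_C Cadd_def intro!: bexI[of _ "\<lambda>k. - x k"] Cset_uminus)
qed (auto simp: one_addgrp_C Cadd_closed Cset_zero, auto simp: Cadd_def)

lemma group_addgrp_C: "group (addgrp Cset Cadd)"
  using comm_group_addgrp_C comm_group.axioms(2) by blast

lemma group_mulgrp_C: "group (mulgrp Cset Cmul)"
proof (rule groupI)
  fix x assume x: "x \<in> carrier (mulgrp Cset Cmul)"
  let ?y = "\<lambda>k. - shift (- coefsum x) x k"
  have "?y \<in> Cset" and "coefsum ?y = - coefsum x"
    using x by (simp_all add: Cset_uminus shift_closed coefsum_uminus coefsum_shift)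
  then show "\<exists>y\<in>carrier (mulgrp Cset Cmul). y \<otimes>\<^bsub>mulgrp Cset Cmul\<^esub> x = \<one>\<^bsub>mulgrp Cset Cmul\<^esub>"
    by (auto simp: one_mulgrp_C Cmul_eq shift_def fun_eq_iff intro!: bexI[of _ ?y])
next
  fix x y z
  assume "x \<in> carrier (mulgrp Cset Cmul)" "y \<in> carrier (mulgrp Cset Cmul)"
  then have "coefsum (Cmul x y) = coefsum x + coefsum y" by (simp add: coefsum_Cmul)
  then show "x \<otimes>\<^bsub>mulgrp Cset Cmul\<^esub> y \<otimes>\<^bsub>mulgrp Cset Cmul\<^esub> z =
      x \<otimes>\<^bsub>mulgrp Cset Cmul\<^esub> (y \<otimes>\<^bsub>mulgrp Cset Cmul\<^esub> z)"
    by (simp add: Cmul_eq[of "Cmul x y"]) (simp add: Cmul_eq fun_eq_iff algebra_simps)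
qed (auto simp: one_mulgrp_C Cmul_closed Cset_zero, auto simp: Cmul_eq coefsum_zero)

lemma bneg_C: "x \<in> Cset \<Longrightarrow> bneg Cset Cadd x = (\<lambda>k. - x k)"
  unfolding bneg_def
  by (rule group.inv_equality[OF group_addgrp_C])
     (auto simp: one_addgrp_C Cadd_def Cset_uminus)

lemma bzero_C: "bzero Cset Cadd = (\<lambda>k. 0)"
  by (simp add: bzero_def one_addgrp_C)

lemma left_brace_C: "left_brace Cset Cadd Cmul"
  unfolding left_brace_def
  by (auto simp: comm_group_addgrp_C group_mulgrp_C bneg_C Cmul_closed Cadd_closed
      coefsum_Cadd Cmul_eq Cadd_def fun_eq_iff)

lemma bstar_C:
  "a \<in> Cset \<Longrightarrow> b \<in> Cset \<Longrightarrow> bstar Cset Cadd Cmul a b = Cadd (shift (coefsum a) b) (\<lambda>k. - b k)"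
  by (simp add: bstar_def bneg_C Cmul_closed Cadd_def Cmul_eq shift_def fun_eq_iff)

lemma bstar_C_in_kernel:
  "a \<in> Cset \<Longrightarrow> b \<in> Cset \<Longrightarrow> bstar Cset Cadd Cmul a b \<in> {x \<in> Cset. coefsum x = 0}"
  by (simp add: bstar_C Cadd_closed shift_closed Cset_uminus coefsum_Cadd coefsum_shift coefsum_uminus)

lemma subgroup_coefsum_kernel: "subgroup {x \<in> Cset. coefsum x = 0} (addgrp Cset Cadd)"
proof (rule group.subgroupI[OF group_addgrp_C])
  fix a assume "a \<in> {x \<in> Cset. coefsum x = 0}"
  then show "inv\<^bsub>addgrp Cset Cadd\<^esub> a \<in> {x \<in> Cset. coefsum x = 0}"
    using bneg_C[of a] by (simp add: bneg_def Cset_uminus coefsum_uminus)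
qed (use Cset_zero coefsum_zero in \<open>auto simp: Cadd_closed coefsum_Cadd\<close>)

lemma setstar_C_subset_kernel: "setstar Cset Cadd Cmul Cset Cset \<subseteq> {x \<in> Cset. coefsum x = 0}"
  unfolding setstar_def
  by (rule group.generate_subgroup_incl[OF group_addgrp_C _ subgroup_coefsum_kernel])
     (use bstar_C_in_kernel in blast)

lemma rser3_C: "rser Cset Cadd Cmul 3 = {bzero Cset Cadd}"
proof -
  have star_kernel: "bstar Cset Cadd Cmul l m = \<one>\<^bsub>addgrp Cset Cadd\<^esub>"
    if "l \<in> Cset" "coefsum l = 0" "m \<in> Cset" for l m
    using that by (simp add: bstar_C shift_def one_addgrp_C Cadd_def)
  have zero_in: "(\<lambda>k. 0) \<in> setstar Cset Cadd Cmul Cset Cset"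
    unfolding setstar_def using generate.one[of "addgrp Cset Cadd"] by (simp add: one_addgrp_C)
  have "{bstar Cset Cadd Cmul l m |l m. l \<in> setstar Cset Cadd Cmul Cset Cset \<and> m \<in> Cset}
        = {\<one>\<^bsub>addgrp Cset Cadd\<^esub>}"
    using setstar_C_subset_kernel zero_in Cset_zero coefsum_zero
    by (auto intro!: star_kernel) (metis star_kernel one_addgrp_C)
  then show ?thesis
    by (simp add: numeral_eq_Suc setstar_def bzero_def group.generate_one[OF group_addgrp_C])
qed

lemma cbasis_closed: "cbasis i \<in> Cset"
  and coefsum_cbasis: "coefsum (cbasis i) = 1"
proof -
  have "{k. cbasis i k \<noteq> 0} = {i}" by (auto simp: cbasis_def)
  then show "cbasis i \<in> Cset" "coefsum (cbasis i) = 1"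
    by (simp_all add: Cset_iff coefsum_def cbasis_def)
qed

lemma Cmul_cbasis: "Cmul x (cbasis i) = Cadd x (cbasis (i + coefsum x))"
  by (auto simp: Cmul_eq Cadd_def cbasis_def fun_eq_iff)

lemma Cset_subset_subgroup:
  assumes S: "subgroup S (addgrp Cset Cadd)" and basis: "\<And>i. cbasis i \<in> S"
  shows "Cset \<subseteq> S"
proof -
  have add: "Cadd x y \<in> S" if "x \<in> S" "y \<in> S" for x y
    using subgroup.m_closed[OF S that] by simp
  have neg: "(\<lambda>k. - x k) \<in> S" if "x \<in> S" for x
    using subgroup.m_inv_closed[OF S that] subgroup.subset[OF S] that
    by (auto simp: bneg_def bneg_C[symmetric])
  have zero: "(\<lambda>k. 0) \<in> S"
    using subgroup.one_closed[OF S] by (simp add: one_addgrp_C)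
  have multiple: "(\<lambda>k. m * cbasis i k) \<in> S" for m i
  proof (induction m rule: int_induct[where k=0])
    case (step1 m)
    have "(\<lambda>k. (m + 1) * cbasis i k) = Cadd (\<lambda>k. m * cbasis i k) (cbasis i)"
      by (simp add: Cadd_def algebra_simps)
    with step1 show ?case using add basis by metis
  next
    case (step2 m)
    have "(\<lambda>k. (m - 1) * cbasis i k) = Cadd (\<lambda>k. m * cbasis i k) (\<lambda>k. - cbasis i k)"
      by (simp add: Cadd_def algebra_simps)
    with step2 show ?case using add neg basis by metis
  qed (simp add: zero)
  have "x \<in> S" if "finite F" "{i. x i \<noteq> 0} \<subseteq> F" for F x
    using that
  proof (induction F arbitrary: x rule: finite_induct)
    case empty
    then have "x = (\<lambda>k. 0)" by (auto simp: fun_eq_iff)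
    with zero show ?case by simp
  next
    case (insert a F)
    have "x(a := 0) \<in> S" using insert by (intro insert.IH) auto
    moreover have "x = Cadd (x(a := 0)) (\<lambda>k. x a * cbasis a k)"
      by (auto simp: Cadd_def cbasis_def fun_eq_iff)
    ultimately show ?case using add multiple by metis
  qed
  then show ?thesis by (auto simp: Cset_iff)
qed

text \<open>Left multiplication by c_0 and by its inverse -c_(-1) moves along the basis.\<close>
lemma Cset_subset_subbrace:
  assumes S: "subbrace Cset Cadd Cmul S" and c0: "cbasis 0 \<in> S"
  shows "Cset \<subseteq> S"
proof -
  have Sa: "subgroup S (addgrp Cset Cadd)" and Sm: "subgroup S (mulgrp Cset Cmul)"
    using S by (auto simp: subbrace_def)
  have shift_basis: "cbasis (i + coefsum x) \<in> S" if "x \<in> S" "cbasis i \<in> S" for x i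
  proof -
    have "cbasis (i + coefsum x) = Cadd (bneg Cset Cadd x) (Cmul x (cbasis i))"
      using subgroup.subset[OF Sa] that by (auto simp: Cmul_cbasis bneg_C Cadd_def fun_eq_iff)
    then show ?thesis
      using that subgroup.m_closed[OF Sa] subgroup.m_inv_closed[OF Sa] subgroup.m_closed[OF Sm]
      by (simp add: bneg_def)
  qed
  define c0_inv where "c0_inv = inv\<^bsub>mulgrp Cset Cmul\<^esub> (cbasis 0)"
  have "Cmul (\<lambda>k. - cbasis (-1) k) (cbasis 0) = \<one>\<^bsub>mulgrp Cset Cmul\<^esub>"
    by (simp add: Cmul_cbasis coefsum_uminus coefsum_cbasis Cadd_def one_mulgrp_C)
  then have "c0_inv = (\<lambda>k. - cbasis (-1) k)"
    unfolding c0_inv_def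
    by (intro group.inv_equality[OF group_mulgrp_C]) (simp_all add: cbasis_closed Cset_uminus)
  then have c0_inv: "c0_inv \<in> S" "coefsum c0_inv = -1"
    using subgroup.m_inv_closed[OF Sm c0] by (simp_all add: c0_inv_def coefsum_uminus coefsum_cbasis)
  have "cbasis i \<in> S" for i
  proof (induction i rule: int_induct[where k=0])
    case (step1 i)
    then show ?case using shift_basis[OF c0] by (simp add: coefsum_cbasis)
  next
    case (step2 i)
    then show ?case using shift_basis[OF c0_inv(1)] by (simp add: c0_inv(2))
  qed (rule c0)
  then show ?thesis by (rule Cset_subset_subgroup[OF Sa])
qed

lemma bstar_cbasis0_nonzero:
  assumes x: "x \<in> Cset" "x \<noteq> (\<lambda>k. 0)"
  shows "bstar Cset Cadd Cmul (cbasis 0) x \<noteq> (\<lambda>k. 0)"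
proof
  let ?S = "{i. x i \<noteq> 0}"
  have fin: "finite ?S" and ne: "?S \<noteq> {}" using x by (auto simp: Cset_iff)
  have "x (Max ?S) \<noteq> 0" using Max_in[OF fin ne] by simp
  moreover have "x (Max ?S + 1) = 0" using Max_ge[OF fin, of "Max ?S + 1"] by force
  moreover assume "bstar Cset Cadd Cmul (cbasis 0) x = (\<lambda>k. 0)"
  then have "x (k - 1) = x k" for k
    using x cbasis_closed by (simp add: bstar_C coefsum_cbasis shift_def Cadd_def fun_eq_iff)
  then have "x (Max ?S) = x (Max ?S + 1)" by (metis add_diff_cancel_right')
  ultimately show False by simp
qed

lemma lser_C_nonzero: "lser Cset Cadd Cmul (Suc n) \<subseteq> Cset
    \<and> (\<exists>x\<in>lser Cset Cadd Cmul (Suc n). x \<noteq> (\<lambda>k. 0))"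
proof (induction n)
  case 0
  have "cbasis 0 \<noteq> (\<lambda>k. 0)" by (auto simp: cbasis_def fun_eq_iff)
  then show ?case using cbasis_closed by auto
next
  case (Suc n)
  let ?L = "lser Cset Cadd Cmul (Suc n)"
  let ?gens = "{bstar Cset Cadd Cmul l m |l m. l \<in> Cset \<and> m \<in> ?L}"
  obtain x where x: "x \<in> ?L" "x \<noteq> (\<lambda>k. 0)" and sub: "?L \<subseteq> Cset"
    using Suc by blast
  have L: "lser Cset Cadd Cmul (Suc (Suc n)) = generate (addgrp Cset Cadd) ?gens"
    by (simp add: setstar_def)
  have "?gens \<subseteq> Cset"
    using sub bstar_C_in_kernel by blast
  then have "generate (addgrp Cset Cadd) ?gens \<subseteq> Cset"
    using group.generate_incl[OF group_addgrp_C] by simp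
  moreover have "bstar Cset Cadd Cmul (cbasis 0) x \<in> generate (addgrp Cset Cadd) ?gens"
    using x cbasis_closed by (intro generate.incl) blast
  ultimately show ?case
    unfolding L using bstar_cbasis0_nonzero[of x] x sub by blast
qed

lemma lser_C: "j \<ge> 1 \<Longrightarrow> lser Cset Cadd Cmul j \<noteq> {bzero Cset Cadd}"
  using lser_C_nonzero[of "j - 1"] by (auto simp: bzero_C)


lemma subbrace_gen_C: "subbrace_gen Cset Cadd Cmul (cbasis 0) = Cset"
proof
  show "subbrace_gen Cset Cadd Cmul (cbasis 0) \<subseteq> Cset"
    by (rule subbrace_gen_least[OF subbrace_carrier[OF left_brace_C] cbasis_closed])
  show "Cset \<subseteq> subbrace_gen Cset Cadd Cmul (cbasis 0)"
    unfolding subbrace_gen_def using Cset_subset_subbrace by blast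
qed

lemma brace_hom_C_image:
  assumes A: "left_brace A addA mulA"
    and f: "brace_hom Cset Cadd Cmul addA mulA f" "f ` Cset \<subseteq> A"
  shows "f ` Cset = subbrace_gen A addA mulA (f (cbasis 0))"
proof
  show "subbrace_gen A addA mulA (f (cbasis 0)) \<subseteq> f ` Cset"
    by (rule subbrace_gen_least[OF subbrace_image[OF left_brace_C A f]])
       (simp add: cbasis_closed)
  show "f ` Cset \<subseteq> subbrace_gen A addA mulA (f (cbasis 0))"
  proof (unfold subbrace_gen_def, rule Inter_greatest)
    fix S assume "S \<in> {S. subbrace A addA mulA S \<and> f (cbasis 0) \<in> S}"
    then have "Cset \<subseteq> {x \<in> Cset. f x \<in> S}"
      using subbrace_vimage[OF left_brace_C A f] cbasis_closed
      by (intro Cset_subset_subbrace) auto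
    then show "f ` Cset \<subseteq> S" by blast
  qed
qed

lemma brace_hom_C_unique:
  assumes A: "left_brace A addA mulA"
    and f: "brace_hom Cset Cadd Cmul addA mulA f" "f ` Cset \<subseteq> A"
    and g: "brace_hom Cset Cadd Cmul addA mulA g" "g ` Cset \<subseteq> A"
    and "f (cbasis 0) = g (cbasis 0)"
  shows "x \<in> Cset \<Longrightarrow> f x = g x"
  using Cset_subset_subbrace[OF subbrace_equalizer[OF left_brace_C A f g]] assms cbasis_closed
  by blast


section \<open>Left braces with A^(3) = 0\<close>

locale brace =
  fixes A :: "'a set" and add mul :: "'a \<Rightarrow> 'a \<Rightarrow> 'a"
  assumes is_left_brace: "left_brace A add mul"
begin

sublocale G: comm_group "addgrp A add"
  using is_left_brace by (simp add: left_brace_def)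

sublocale M: group "mulgrp A mul"
  using is_left_brace by (simp add: left_brace_def)

abbreviation zero :: 'a where "zero \<equiv> bzero A add"
abbreviation neg :: "'a \<Rightarrow> 'a" where "neg \<equiv> bneg A add"
abbreviation minv :: "'a \<Rightarrow> 'a" where "minv x \<equiv> inv\<^bsub>mulgrp A mul\<^esub> x"

lemma zero_eq: "zero = \<one>\<^bsub>addgrp A add\<^esub>" by (simp add: bzero_def)
lemma neg_eq: "neg x = inv\<^bsub>addgrp A add\<^esub> x" by (simp add: bneg_def)

lemma add_closed [simp]: "x \<in> A \<Longrightarrow> y \<in> A \<Longrightarrow> add x y \<in> A"
  using G.m_closed[of x y] by simp
lemma zero_closed [simp]: "zero \<in> A"
  using G.one_closed by (simp add: zero_eq)
lemma neg_closed [simp]: "x \<in> A \<Longrightarrow> neg x \<in> A"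
  using G.inv_closed[of x] by (simp add: neg_eq)
lemma add_assoc: "x \<in> A \<Longrightarrow> y \<in> A \<Longrightarrow> w \<in> A \<Longrightarrow> add (add x y) w = add x (add y w)"
  using G.m_assoc[of x y w] by simp
lemma add_commute: "x \<in> A \<Longrightarrow> y \<in> A \<Longrightarrow> add x y = add y x"
  using G.m_comm[of x y] by simp
lemma add_left_commute: "x \<in> A \<Longrightarrow> y \<in> A \<Longrightarrow> w \<in> A \<Longrightarrow> add x (add y w) = add y (add x w)"
  using G.m_lcomm[of x y w] by simp
lemmas add_ac = add_assoc add_commute add_left_commute
lemma add_zero [simp]: "x \<in> A \<Longrightarrow> add zero x = x" "x \<in> A \<Longrightarrow> add x zero = x"
  using G.l_one[of x] G.r_one[of x] by (simp_all add: zero_eq)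
lemma add_neg [simp]: "x \<in> A \<Longrightarrow> add x (neg x) = zero" "x \<in> A \<Longrightarrow> add (neg x) x = zero"
  using G.l_inv[of x] G.r_inv[of x] by (simp_all add: zero_eq neg_eq)
lemma add_neg_cancel [simp]: "x \<in> A \<Longrightarrow> y \<in> A \<Longrightarrow> add x (add (neg x) y) = y"
  "x \<in> A \<Longrightarrow> y \<in> A \<Longrightarrow> add (neg x) (add x y) = y"
  by (simp_all flip: add_assoc)
lemma neg_neg [simp]: "x \<in> A \<Longrightarrow> neg (neg x) = x"
  using G.inv_inv[of x] by (simp add: neg_eq)
lemma neg_zero [simp]: "neg zero = zero"
  using G.inv_one by (simp add: zero_eq neg_eq)
lemma neg_add: "x \<in> A \<Longrightarrow> y \<in> A \<Longrightarrow> neg (add x y) = add (neg x) (neg y)"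
  using G.inv_mult[of x y] by (simp add: neg_eq)
lemma add_left_cancel: "x \<in> A \<Longrightarrow> y \<in> A \<Longrightarrow> w \<in> A \<Longrightarrow> add x y = add x w \<longleftrightarrow> y = w"
  by (metis add_neg_cancel(2))
lemma neg_unique: "x \<in> A \<Longrightarrow> y \<in> A \<Longrightarrow> add x y = zero \<Longrightarrow> neg x = y"
  by (metis add_neg(1) add_left_cancel neg_closed)

lemma mul_closed [simp]: "x \<in> A \<Longrightarrow> y \<in> A \<Longrightarrow> mul x y \<in> A"
  using M.m_closed[of x y] by simp
lemma mul_assoc: "x \<in> A \<Longrightarrow> y \<in> A \<Longrightarrow> w \<in> A \<Longrightarrow> mul (mul x y) w = mul x (mul y w)"
  using M.m_assoc[of x y w] by simp

lemma mul_add: "a \<in> A \<Longrightarrow> b \<in> A \<Longrightarrow> c \<in> A \<Longrightarrow> mul a (add b c) = add (add (mul a b) (neg a)) (mul a c)"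
  using is_left_brace by (simp add: left_brace_def)

lemma one_mulgrp: "\<one>\<^bsub>mulgrp A mul\<^esub> = zero"
proof -
  let ?e = "\<one>\<^bsub>mulgrp A mul\<^esub>"
  have e: "?e \<in> A" and e_mul: "\<And>y. y \<in> A \<Longrightarrow> mul ?e y = y"
    using M.one_closed M.l_one by simp_all
  have "mul ?e (add zero zero) = add (add (mul ?e zero) (neg ?e)) (mul ?e zero)"
    by (rule mul_add) (simp_all add: e)
  then have "neg ?e = zero" by (simp add: e_mul e add_ac)
  then show ?thesis by (metis neg_neg neg_zero e)
qed

lemma minv_closed [simp]: "x \<in> A \<Longrightarrow> minv x \<in> A"
  using M.inv_closed[of x] by simp
lemma mul_zero [simp]: "x \<in> A \<Longrightarrow> mul zero x = x" "x \<in> A \<Longrightarrow> mul x zero = x"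
  using M.l_one[of x] M.r_one[of x] by (simp_all add: one_mulgrp)
lemma mul_minv [simp]: "x \<in> A \<Longrightarrow> mul x (minv x) = zero" "x \<in> A \<Longrightarrow> mul (minv x) x = zero"
  using M.l_inv[of x] M.r_inv[of x] by (simp_all add: one_mulgrp)

definition lam :: "'a \<Rightarrow> 'a \<Rightarrow> 'a" where
  "lam a y = add (neg a) (mul a y)"

lemma lam_closed [simp]: "a \<in> A \<Longrightarrow> y \<in> A \<Longrightarrow> lam a y \<in> A"
  by (simp add: lam_def)

lemma mul_eq_add_lam: "a \<in> A \<Longrightarrow> y \<in> A \<Longrightarrow> mul a y = add a (lam a y)"
  by (simp add: lam_def)

lemma lam_add: "a \<in> A \<Longrightarrow> b \<in> A \<Longrightarrow> c \<in> A \<Longrightarrow> lam a (add b c) = add (lam a b) (lam a c)"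
  by (simp add: lam_def mul_add add_ac)

lemma lam_in_hom: "a \<in> A \<Longrightarrow> lam a \<in> hom (addgrp A add) (addgrp A add)"
  by (auto simp: hom_def lam_add)

lemma lam_neg: "a \<in> A \<Longrightarrow> b \<in> A \<Longrightarrow> lam a (neg b) = neg (lam a b)"
  using lam_add[of a b "neg b"] by (simp add: lam_def neg_unique[symmetric])

lemma lam_zero [simp]: "y \<in> A \<Longrightarrow> lam zero y = y"
  by (simp add: lam_def)

lemma lam_of_mul: "a \<in> A \<Longrightarrow> b \<in> A \<Longrightarrow> c \<in> A \<Longrightarrow> lam (mul a b) c = lam a (lam b c)"
proof -
  assume abc: "a \<in> A" "b \<in> A" "c \<in> A"
  have "lam a (lam b c) = add (neg (lam a b)) (lam a (mul b c))"
    using abc by (simp add: lam_def[of b c] lam_add lam_neg)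
  also have "\<dots> = lam (mul a b) c"
    using abc by (simp add: lam_def mul_assoc neg_add add_ac)
  finally show ?thesis by simp
qed

lemma bstar_eq_lam: "a \<in> A \<Longrightarrow> c \<in> A \<Longrightarrow> bstar A add mul a c = add (lam a c) (neg c)"
  by (simp add: bstar_def lam_def)

lemma bstar_closed [simp]: "a \<in> A \<Longrightarrow> c \<in> A \<Longrightarrow> bstar A add mul a c \<in> A"
  by (simp add: bstar_eq_lam)

end

locale brace_rser3 = brace +
  assumes rser3_zero: "rser A add mul 3 = {bzero A add}"
begin

lemma lam_of_bstar: "a \<in> A \<Longrightarrow> c \<in> A \<Longrightarrow> y \<in> A \<Longrightarrow> lam (bstar A add mul a c) y = y"
proof -
  assume acy: "a \<in> A" "c \<in> A" "y \<in> A"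
  have "bstar A add mul a c \<in> setstar A add mul A A"
    unfolding setstar_def using acy by (intro generate.incl) blast
  moreover have "rser A add mul 3 = setstar A add mul (setstar A add mul A A) A"
    by (simp add: numeral_eq_Suc)
  ultimately have "bstar A add mul (bstar A add mul a c) y \<in> rser A add mul 3"
    unfolding setstar_def using acy by (simp only:) (intro generate.incl, blast)
  then have "add (lam (bstar A add mul a c) y) (neg y) = zero"
    using acy by (simp add: rser3_zero bstar_eq_lam)
  then show ?thesis
    using acy by (metis add_neg(2) add_left_cancel add_commute lam_closed bstar_closed neg_closed)
qed

text \<open>With k = x\<inverse> * c one has x + c = x (k c), and \<lambda>_k is trivial.\<close>
lemma lam_of_add: "x \<in> A \<Longrightarrow> c \<in> A \<Longrightarrow> y \<in> A \<Longrightarrow> lam (add x c) y = lam x (lam c y)"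
proof -
  assume xcy: "x \<in> A" "c \<in> A" "y \<in> A"
  define k where "k = bstar A add mul (minv x) c"
  have k: "k \<in> A" and lam_k: "\<And>y. y \<in> A \<Longrightarrow> lam k y = y"
    using xcy by (simp_all add: k_def lam_of_bstar)
  have "mul k c = lam (minv x) c"
    using xcy k lam_k[of c] by (simp add: mul_eq_add_lam k_def bstar_eq_lam add_assoc)
  then have "mul x (mul k c) = add x (lam x (lam (minv x) c))"
    using xcy by (simp add: mul_eq_add_lam[of x])
  also have "lam x (lam (minv x) c) = c"
    using xcy by (simp flip: lam_of_mul)
  finally have "mul x (mul k c) = add x c" .
  then show ?thesis
    using xcy k lam_k by (metis lam_of_mul mul_closed lam_closed)
qed

lemma lam_of_lam: "a \<in> A \<Longrightarrow> c \<in> A \<Longrightarrow> y \<in> A \<Longrightarrow> lam (lam a c) y = lam c y"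
proof -
  assume acy: "a \<in> A" "c \<in> A" "y \<in> A"
  have "lam a c = add (bstar A add mul a c) c"
    using acy by (simp add: bstar_eq_lam add_assoc)
  then show ?thesis using acy by (simp add: lam_of_add lam_of_bstar)
qed

end


lemma hom_finprod:
  assumes G: "comm_group G" and H: "comm_group H" and h: "h \<in> hom G H"
    and "finite F" "f \<in> F \<rightarrow> carrier G"
  shows "h (finprod G f F) = finprod H (\<lambda>i. h (f i)) F"
  using assms(4,5)
proof (induction F rule: finite_induct)
  case empty
  interpret group_hom G H h
    using G H h by (simp add: group_hom_def group_hom_axioms_def comm_group.axioms(2))
  show ?case by (simp add: comm_monoid.finprod_empty[OF comm_group.axioms(1)[OF G]]
      comm_monoid.finprod_empty[OF comm_group.axioms(1)[OF H]])
next
  case (insert a F)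
  interpret G: comm_group G by (rule G)
  interpret H: comm_group H by (rule H)
  have fa: "f a \<in> carrier G" and fF: "f \<in> F \<rightarrow> carrier G" using insert.prems by auto
  have hfF: "(\<lambda>i. h (f i)) \<in> F \<rightarrow> carrier H" using fF h by (auto simp: hom_def)
  have "h (finprod G f (insert a F)) = h (f a) \<otimes>\<^bsub>H\<^esub> h (finprod G f F)"
    using insert.hyps fa fF h by (simp add: hom_mult)
  also have "\<dots> = finprod H (\<lambda>i. h (f i)) (insert a F)"
    using insert.hyps insert.IH[OF fF] fa hfF h by (simp add: hom_in_carrier)
  finally show ?case .
qed

locale brace_rser3_elem = brace_rser3 +
  fixes b :: 'a
  assumes b_closed [simp]: "b \<in> A"
begin

abbreviation zmult :: "int \<Rightarrow> 'a \<Rightarrow> 'a" where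
  "zmult k u \<equiv> u [^]\<^bsub>addgrp A add\<^esub> k"

definition mpow :: "int \<Rightarrow> 'a" where
  "mpow m = b [^]\<^bsub>mulgrp A mul\<^esub> m"

definition basis_image :: "int \<Rightarrow> 'a" where
  "basis_image i = lam (mpow i) b"

definition lift :: "(int \<Rightarrow> int) \<Rightarrow> 'a" where
  "lift x = finprod (addgrp A add) (\<lambda>i. zmult (x i) (basis_image i)) {i. x i \<noteq> 0}"

definition acts_as_pow :: "'a \<Rightarrow> int \<Rightarrow> bool" where
  "acts_as_pow u m \<longleftrightarrow> (\<forall>y\<in>A. lam u y = lam (mpow m) y)"

lemma mpow_closed [simp]: "mpow m \<in> A"
  using M.int_pow_closed[of b m] by (simp add: mpow_def)

lemma mpow_add: "mpow (i + j) = mul (mpow i) (mpow j)"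
  using M.int_pow_mult[of b i j] by (simp add: mpow_def)

lemma mpow_0 [simp]: "mpow 0 = zero"
  by (simp add: mpow_def one_mulgrp)

lemma mpow_1 [simp]: "mpow 1 = b"
  using M.int_pow_1[of b] by (simp add: mpow_def)

lemma zmult_closed [simp]: "u \<in> A \<Longrightarrow> zmult k u \<in> A"
  using G.int_pow_closed[of u k] by simp

lemma basis_image_closed [simp]: "basis_image i \<in> A"
  by (simp add: basis_image_def)

lemma basis_image_shift: "basis_image (i + s) = lam (mpow s) (basis_image i)"
  by (simp add: basis_image_def mpow_add[of s i, simplified add.commute] add.commute lam_of_mul)

lemma lift_closed [simp]: "lift x \<in> A"
  unfolding lift_def using G.finprod_closed[of "\<lambda>i. zmult (x i) (basis_image i)"] by (auto simp: Pi_def)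

lemma lift_eq_finprod:
  assumes "finite F" "{i. x i \<noteq> 0} \<subseteq> F"
  shows "lift x = finprod (addgrp A add) (\<lambda>i. zmult (x i) (basis_image i)) F"
  unfolding lift_def by (rule G.finprod_mono_neutral_cong_left) (use assms in auto)

lemma lift_Cadd:
  assumes x: "x \<in> Cset" and y: "y \<in> Cset"
  shows "lift (Cadd x y) = add (lift x) (lift y)"
proof -
  let ?F = "{i. x i \<noteq> 0} \<union> {i. y i \<noteq> 0}"
  have F: "finite ?F" using x y by (simp add: Cset_iff)
  have "{i. Cadd x y i \<noteq> 0} \<subseteq> ?F" by (auto simp: Cadd_def)
  then have "lift (Cadd x y) = finprod (addgrp A add) (\<lambda>i. zmult (x i + y i) (basis_image i)) ?F"
    using lift_eq_finprod[OF F] by (simp add: Cadd_def)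
  also have "\<dots> = finprod (addgrp A add)
      (\<lambda>i. zmult (x i) (basis_image i) \<otimes>\<^bsub>addgrp A add\<^esub> zmult (y i) (basis_image i)) ?F"
    by (simp add: G.int_pow_mult)
  also have "\<dots> = finprod (addgrp A add) (\<lambda>i. zmult (x i) (basis_image i)) ?F
      \<otimes>\<^bsub>addgrp A add\<^esub> finprod (addgrp A add) (\<lambda>i. zmult (y i) (basis_image i)) ?F"
    by (rule G.finprod_multf) (auto simp: Pi_def)
  also have "\<dots> = add (lift x) (lift y)"
    using lift_eq_finprod[OF F, of x] lift_eq_finprod[OF F, of y] by simp
  finally show ?thesis .
qed

lemma lift_shift:
  assumes y: "y \<in> Cset"
  shows "lift (shift s y) = lam (mpow s) (lift y)"
proof -
  have inj: "inj_on (\<lambda>i. i + s) S" for S by (auto simp: inj_on_def)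
  have "lift (shift s y) = finprod (addgrp A add)
      (\<lambda>i. zmult (shift s y i) (basis_image i)) ((\<lambda>i. i + s) ` {i. y i \<noteq> 0})"
    unfolding lift_def support_shift ..
  also have "\<dots> = finprod (addgrp A add)
      (\<lambda>i. zmult (shift s y (i + s)) (basis_image (i + s))) {i. y i \<noteq> 0}"
    by (rule G.finprod_reindex) (auto simp: Pi_def inj)
  also have "\<dots> = finprod (addgrp A add) (\<lambda>i. lam (mpow s) (zmult (y i) (basis_image i))) {i. y i \<noteq> 0}"
    by (rule G.finprod_cong')
       (auto simp: shift_def basis_image_shift hom_int_pow[OF lam_in_hom] G.is_group)
  also have "\<dots> = lam (mpow s) (lift y)"
    unfolding lift_def using y
    by (intro hom_finprod[symmetric] G.comm_group_axioms lam_in_hom) (auto simp: Cset_iff Pi_def)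
  finally show ?thesis .
qed

lemma acts_as_pow_zero: "acts_as_pow zero 0"
  by (simp add: acts_as_pow_def)

lemma acts_as_pow_add:
  "u \<in> A \<Longrightarrow> v \<in> A \<Longrightarrow> acts_as_pow u m \<Longrightarrow> acts_as_pow v m' \<Longrightarrow> acts_as_pow (add u v) (m + m')"
  by (simp add: acts_as_pow_def lam_of_add mpow_add lam_of_mul)

lemma acts_as_pow_neg:
  assumes u: "u \<in> A" and "acts_as_pow u m"
  shows "acts_as_pow (neg u) (- m)"
  unfolding acts_as_pow_def
proof
  fix y assume y: "y \<in> A"
  define w where "w = lam (mpow (- m)) y"
  have w: "w \<in> A" using y by (simp add: w_def)
  have "lam u w = lam (mul (mpow m) (mpow (- m))) y"
    using assms w y by (simp add: acts_as_pow_def w_def lam_of_mul)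
  also have "\<dots> = y" using y by (simp flip: mpow_add)
  finally have "lam (neg u) y = lam (neg u) (lam u w)" by simp
  also have "\<dots> = w" using u w by (simp flip: lam_of_add)
  finally show "lam (neg u) y = lam (mpow (- m)) y" by (simp add: w_def)
qed

lemma acts_as_pow_zmult:
  assumes u: "u \<in> A" and p: "acts_as_pow u m"
  shows "acts_as_pow (zmult k u) (m * k)"
proof (induction k rule: int_induct[where k=0])
  case base
  then show ?case using acts_as_pow_zero by (simp add: zero_eq)
next
  case (step1 i)
  have "zmult (i + 1) u = add (zmult i u) u"
    using u G.int_pow_mult[of u i 1] by simp
  then show ?case using acts_as_pow_add[OF _ u step1(2) p] u by (simp add: algebra_simps)
next
  case (step2 i)
  have "zmult (i - 1) u = add (zmult i u) (neg u)"
    using u G.int_pow_mult[of u i "-1"] G.int_pow_neg[of u 1] by (simp add: neg_eq)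
  then show ?case
    using acts_as_pow_add[OF _ _ step2(2) acts_as_pow_neg[OF u p]] u by (simp add: algebra_simps)
qed

lemma acts_as_pow_basis_image: "acts_as_pow (basis_image i) 1"
  by (simp add: acts_as_pow_def basis_image_def lam_of_lam)

lemma acts_as_pow_lift:
  assumes "x \<in> Cset"
  shows "acts_as_pow (lift x) (coefsum x)"
proof -
  have "acts_as_pow (finprod (addgrp A add) (\<lambda>i. zmult (x i) (basis_image i)) F) (sum x F)"
    if "finite F" for F
    using that
  proof (induction F rule: finite_induct)
    case empty
    then show ?case using acts_as_pow_zero by (simp add: zero_eq)
  next
    case (insert a F)
    have "finprod (addgrp A add) (\<lambda>i. zmult (x i) (basis_image i)) F \<in> A"
      using G.finprod_closed[of "\<lambda>i. zmult (x i) (basis_image i)" F] by (auto simp: Pi_def)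
    moreover have "acts_as_pow (zmult (x a) (basis_image a)) (x a)"
      using acts_as_pow_zmult[OF _ acts_as_pow_basis_image, of a "x a"] by simp
    ultimately show ?case
      using acts_as_pow_add[OF _ _ _ insert.IH] insert.hyps by (simp add: Pi_def)
  qed
  with assms show ?thesis
    unfolding lift_def coefsum_def by (simp add: Cset_iff)
qed

lemma lift_Cmul:
  assumes x: "x \<in> Cset" and y: "y \<in> Cset"
  shows "lift (Cmul x y) = mul (lift x) (lift y)"
proof -
  have "lift (Cmul x y) = add (lift x) (lift (shift (coefsum x) y))"
    unfolding Cmul_def Clam_eq_shift using lift_Cadd[OF x shift_closed[OF y]] .
  also have "\<dots> = add (lift x) (lam (lift x) (lift y))"
    using lift_shift[OF y] acts_as_pow_lift[OF x] by (simp add: acts_as_pow_def)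
  finally show ?thesis by (simp add: mul_eq_add_lam)
qed

lemma lift_cbasis0: "lift (cbasis 0) = b"
proof -
  have "{i. cbasis 0 i \<noteq> 0} = {0}" by (auto simp: cbasis_def)
  then show ?thesis
    unfolding lift_def by (simp add: cbasis_def basis_image_def flip: zero_eq)
qed

lemma lift_brace_hom: "brace_hom Cset Cadd Cmul add mul lift"
  by (simp add: brace_hom_def lift_Cadd lift_Cmul)

end

lemma C_universal:
  assumes "left_brace A addA mulA" "rser A addA mulA 3 = {bzero A addA}" and b: "b \<in> A"
  shows "\<exists>\<alpha>. (brace_hom Cset Cadd Cmul addA mulA \<alpha>
              \<and> \<alpha> ` Cset = subbrace_gen A addA mulA b \<and> \<alpha> (cbasis 0) = b)
          \<and> (\<forall>\<beta>. brace_hom Cset Cadd Cmul addA mulA \<beta>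
              \<and> \<beta> ` Cset = subbrace_gen A addA mulA b \<and> \<beta> (cbasis 0) = b
              \<longrightarrow> (\<forall>x\<in>Cset. \<beta> x = \<alpha> x))"
proof -
  interpret brace_rser3_elem A addA mulA b
    using assms by unfold_locales auto
  have lift: "brace_hom Cset Cadd Cmul addA mulA lift" "lift ` Cset \<subseteq> A" "lift (cbasis 0) = b"
    by (auto simp: lift_brace_hom lift_cbasis0)
  have "\<beta> x = lift x"
    if \<beta>: "brace_hom Cset Cadd Cmul addA mulA \<beta>" "\<beta> ` Cset = subbrace_gen A addA mulA b"
      "\<beta> (cbasis 0) = b" and x: "x \<in> Cset" for \<beta> x
  proof -
    have "\<beta> ` Cset \<subseteq> A"
      using \<beta>(2) subbrace_gen_least[OF subbrace_carrier[OF is_left_brace] b] by simp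
    then show ?thesis
      using brace_hom_C_unique[OF is_left_brace \<beta>(1) _ lift(1,2)] \<beta>(3) lift(3) x by simp
  qed
  moreover have "lift ` Cset = subbrace_gen A addA mulA b"
    using brace_hom_C_image[OF is_left_brace lift(1,2)] lift(3) by simp
  ultimately show ?thesis
    using lift by blast
qed

theorem theoremC:
  fixes A :: "'a set" and addA mulA :: "'a \<Rightarrow> 'a \<Rightarrow> 'a"
  shows "left_brace Cset Cadd Cmul
    \<and> rser Cset Cadd Cmul 3 = {bzero Cset Cadd}
    \<and> subbrace_gen Cset Cadd Cmul (cbasis 0) = Cset
    \<and> (\<forall>j\<ge>1. lser Cset Cadd Cmul j \<noteq> {bzero Cset Cadd})
    \<and> (left_brace A addA mulA \<and> rser A addA mulA 3 = {bzero A addA} \<longrightarrow>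
        (\<forall>b\<in>A. \<exists>\<alpha>. (brace_hom Cset Cadd Cmul addA mulA \<alpha>
                      \<and> \<alpha> ` Cset = subbrace_gen A addA mulA b \<and> \<alpha> (cbasis 0) = b)
                 \<and> (\<forall>\<beta>. brace_hom Cset Cadd Cmul addA mulA \<beta>
                      \<and> \<beta> ` Cset = subbrace_gen A addA mulA b \<and> \<beta> (cbasis 0) = b
                      \<longrightarrow> (\<forall>x\<in>Cset. \<beta> x = \<alpha> x))))"
  by (intro conjI impI allI ballI left_brace_C rser3_C subbrace_gen_C lser_C C_universal) auto

end
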